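(* Let $\mathfrak E$ be an expectation of contributions with weights satisfying $c(k)=c(n-1-k)$ for all $k\in\{0,\dots,n-1\}$. Then for all $g\in\mathbb B(X)$ and $x\in X$, $$\mathfrak E_x(\omega_g)=\mathfrak E_x(\nu_{\overline g}).$$
   Context: $X$ is a fixed finite set of $n=|X|$ variables; $\mathbb B(X)$ is the set of Boolean functions $\{0,1\}^X\to\{0,1\}$, $\overline g$ denotes negation. For assignments $\mathbf u$ over $S$ and $\mathbf w$ over $X\setminus S$, $\mathbf u;\mathbf w$ is their concatenation. A cooperative game is $v:2^X\to\mathbb R$; $\partial_xv(S)=v(S\cup\{x\})-v(S\setminus\{x\})$. An expectation of contributions is a map $(x,v)\mapsto\mathfrak E_x(v)$ for which there are nonnegative weights $c(0),\dots,c(n-1)$ with $\sum_{S\subseteq X\setminus\{x\}}c(|S|)=1$ and $\mathfrak E_x(v)=\sum_{S\subseteq X\setminus\{x\}}c(|S|)\,\partial_xv(S)$. Dominating CGM: $\omega_f(S)=1$ if $\exists\mathbf u\in\{0,1\}^S\ \forall\mathbf w\in\{0,1\}^{X\setminus S}: f(\mathbf u;\mathbf w)=1$, else $0$. Rectifying CGM: $\nu_f(S)=1$ if $\forall\mathbf w\in\{0,1\}^{X\setminus S}\ \exists\mathbf u\in\{0,1\}^S: f(\mathbf u;\mathbf w)=1$, else $0$. *)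

theory Defs
  imports Complex_Main
begin

text \<open>The variable set X is the universe of a finite type 'a; n = CARD('a).\<close>

definition concat_assign :: "'a set \<Rightarrow> ('a \<Rightarrow> bool) \<Rightarrow> ('a \<Rightarrow> bool) \<Rightarrow> ('a \<Rightarrow> bool)" where
  "concat_assign S u w = (\<lambda>y. if y \<in> S then u y else w y)"

definition dominating_cgm :: "(('a \<Rightarrow> bool) \<Rightarrow> bool) \<Rightarrow> 'a set \<Rightarrow> real" where
  "dominating_cgm f S = (if \<exists>u. \<forall>w. f (concat_assign S u w) then 1 else 0)"

definition rectifying_cgm :: "(('a \<Rightarrow> bool) \<Rightarrow> bool) \<Rightarrow> 'a set \<Rightarrow> real" where
  "rectifying_cgm f S = (if \<forall>w. \<exists>u. f (concat_assign S u w) then 1 else 0)"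

definition contrib :: "('a set \<Rightarrow> real) \<Rightarrow> 'a \<Rightarrow> 'a set \<Rightarrow> real" where
  "contrib v x S = v (insert x S) - v (S - {x})"

definition expectation_weights :: "'a::finite itself \<Rightarrow> (nat \<Rightarrow> real) \<Rightarrow> bool" where
  "expectation_weights (t :: 'a itself) c \<longleftrightarrow>
     (\<forall>k < card (UNIV :: 'a set). 0 \<le> c k) \<and>
     (\<forall>x::'a. (\<Sum>S \<in> {S. S \<subseteq> UNIV - {x}}. c (card S)) = 1)"

definition expect_contrib :: "(nat \<Rightarrow> real) \<Rightarrow> 'a \<Rightarrow> ('a set \<Rightarrow> real) \<Rightarrow> real" where
  "expect_contrib c x v = (\<Sum>S \<in> {S. S \<subseteq> UNIV - {x}}. c (card S) * contrib v x S)"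

end

theory Submission
  imports Defs
begin

text \<open>Negating g exchanges the quantifier pattern of the two games on complementary
  coalitions: \<open>\<nu>\<^bsub>\<not>g\<^esub>(S) = 1 - \<omega>\<^bsub>g\<^esub>(X \<setminus> S)\<close>. Hence the contribution of x to
  \<open>\<nu>\<^bsub>\<not>g\<^esub>\<close> at S equals its contribution to \<open>\<omega>\<^bsub>g\<^esub>\<close> at the complement of S in
  \<open>X \<setminus> {x}\<close>, and complementation maps coalitions of size k to coalitions of size
  n - 1 - k, on which symmetric weights agree.\<close>

lemma concat_assign_Compl: "concat_assign S u w = concat_assign (- S) w u"
  unfolding concat_assign_def by auto

lemma rectifying_cgm_Not: "rectifying_cgm (\<lambda>a. \<not> g a) S = 1 - dominating_cgm g (- S)"
  unfolding rectifying_cgm_def dominating_cgm_def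
  by (auto simp: concat_assign_Compl[of S])

lemma contrib_rectifying_cgm_Not:
  assumes "x \<notin> S"
  shows "contrib (rectifying_cgm (\<lambda>a. \<not> g a)) x S = contrib (dominating_cgm g) x (UNIV - {x} - S)"
proof -
  have "- insert x S = UNIV - {x} - S" by auto
  moreover have "- (S - {x}) = insert x (UNIV - {x} - S)" using assms by auto
  moreover have "UNIV - {x} - S - {x} = UNIV - {x} - S" by auto
  ultimately show ?thesis unfolding contrib_def rectifying_cgm_Not by simp
qed

lemma card_Diff_insert_UNIV:
  assumes "S \<subseteq> UNIV - {x}"
  shows "card (UNIV - {x} - S :: 'a::finite set) = card (UNIV :: 'a set) - 1 - card S"
    and "card S < card (UNIV :: 'a set)"
proof -
  show "card (UNIV - {x} - S :: 'a set) = card (UNIV :: 'a set) - 1 - card S"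
    using assms by (simp add: card_Diff_subset card_Diff_singleton)
  show "card S < card (UNIV :: 'a set)"
    using assms by (intro psubset_card_mono) auto
qed

lemma expect_contrib_reflect:
  fixes c :: "nat \<Rightarrow> real" and x :: "'a::finite"
  assumes symmetric: "\<forall>k < card (UNIV :: 'a set). c k = c (card (UNIV :: 'a set) - 1 - k)"
  shows "expect_contrib c x v
       = (\<Sum>S \<in> {S. S \<subseteq> UNIV - {x}}. c (card S) * contrib v x (UNIV - {x} - S))"
proof -
  let ?compl = "\<lambda>S. UNIV - {x} - S"
  have weight: "c (card (?compl S)) = c (card S)" if "S \<subseteq> UNIV - {x}" for S
    using symmetric card_Diff_insert_UNIV[OF that] by metis
  have "expect_contrib c x v = (\<Sum>S \<in> {S. S \<subseteq> UNIV - {x}}. c (card (?compl S)) * contrib v x (?compl S))"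
    unfolding expect_contrib_def
    by (rule sum.reindex_bij_witness[of _ ?compl ?compl, symmetric]) auto
  also have "\<dots> = (\<Sum>S \<in> {S. S \<subseteq> UNIV - {x}}. c (card S) * contrib v x (?compl S))"
    by (rule sum.cong[OF refl]) (simp add: weight)
  finally show ?thesis .
qed

theorem mainTheorem14:
  fixes c :: "nat \<Rightarrow> real"
  assumes "expectation_weights TYPE('a::finite) c"
    and "\<forall>k < card (UNIV :: 'a set). c k = c (card (UNIV :: 'a set) - 1 - k)"
  shows "\<forall>(g :: ('a \<Rightarrow> bool) \<Rightarrow> bool) (x :: 'a).
           expect_contrib c x (dominating_cgm g) = expect_contrib c x (rectifying_cgm (\<lambda>a. \<not> g a))"
proof (intro allI)
  fix g :: "('a \<Rightarrow> bool) \<Rightarrow> bool" and x :: 'a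
  have "expect_contrib c x (dominating_cgm g)
      = (\<Sum>S \<in> {S. S \<subseteq> UNIV - {x}}. c (card S) * contrib (dominating_cgm g) x (UNIV - {x} - S))"
    using assms(2) by (rule expect_contrib_reflect)
  also have "\<dots> = expect_contrib c x (rectifying_cgm (\<lambda>a. \<not> g a))"
    unfolding expect_contrib_def
    by (rule sum.cong[OF refl]) (simp add: contrib_rectifying_cgm_Not subset_Diff_insert)
  finally show "expect_contrib c x (dominating_cgm g) = expect_contrib c x (rectifying_cgm (\<lambda>a. \<not> g a))" .
qed

end
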